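(* There exists a constant $0<c'<1$ such that for all integers $m\ge1$, $n>2m$ and all $\sigma_1^2,\dots,\sigma_n^2>0$, $\mathrm{Ent}(\sigma^2_L)\ge c'\,\mathrm{Ent}(\sigma^2_{G^{r}})-c'\ln(2)$, where $L\subset G^{r}$ with $|L|=2m$ consists of $2m$ arms of $G^{r}$ with the largest variances.
   Context: For a positive vector $a$, $\mathrm{Ent}(a)=-\sum_i\hat a_i\ln\hat a_i$ with $\hat a_i=a_i/\sum_ja_j$; $\sigma^2_S=(\sigma_i^2)_{i\in S}$. Let $\underline\sigma^2=\min_i\sigma_i^2$, $G_j=\{i\in[n]:2^{j-1}\le\sigma_i^2/\underline\sigma^2<2^j\}$ for $j=1,\dots,k$ covering $[n]$. $G'_j=G_j$ if $|G_j|\le2m$, otherwise $G'_j\subset G_j$ with $|G'_j|=2m$; $G^{r}=\bigcup_jG'_j$, the choices made to maximize $\mathrm{Ent}(\sigma^2_{G^{r}})$. *)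

theory Defs
  imports Complex_Main
begin

definition Ent :: "('a \<Rightarrow> real) \<Rightarrow> 'a set \<Rightarrow> real" where
  "Ent a S = - (\<Sum>i\<in>S. (a i / sum a S) * ln (a i / sum a S))"

definition min_var :: "(nat \<Rightarrow> real) \<Rightarrow> nat \<Rightarrow> real" where
  "min_var v n = Min (v ` {1..n})"

definition grp :: "(nat \<Rightarrow> real) \<Rightarrow> nat \<Rightarrow> nat \<Rightarrow> nat set" where
  "grp v n j = {i \<in> {1..n}. (2::real) ^ (j - 1) \<le> v i / min_var v n \<and> v i / min_var v n < 2 ^ j}"

(* R is a possible G^r: R = union of G'_j, where G'_j = G_j if |G_j| \<le> 2m,
   otherwise G'_j \<subseteq> G_j with |G'_j| = 2m *)
definition admissible_Gr :: "(nat \<Rightarrow> real) \<Rightarrow> nat \<Rightarrow> nat \<Rightarrow> nat set \<Rightarrow> bool" where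
  "admissible_Gr v n m R \<longleftrightarrow> R \<subseteq> {1..n} \<and>
     (\<forall>j\<ge>1. (card (grp v n j) \<le> 2 * m \<longrightarrow> R \<inter> grp v n j = grp v n j) \<and>
            (2 * m < card (grp v n j) \<longrightarrow> card (R \<inter> grp v n j) = 2 * m))"

definition is_Gr :: "(nat \<Rightarrow> real) \<Rightarrow> nat \<Rightarrow> nat \<Rightarrow> nat set \<Rightarrow> bool" where
  "is_Gr v n m R \<longleftrightarrow> admissible_Gr v n m R \<and>
     (\<forall>R'. admissible_Gr v n m R' \<longrightarrow> Ent v R' \<le> Ent v R)"

definition is_top :: "(nat \<Rightarrow> real) \<Rightarrow> nat \<Rightarrow> nat set \<Rightarrow> nat set \<Rightarrow> bool" where
  "is_top v m R L \<longleftrightarrow> L \<subseteq> R \<and> card L = 2 * m \<and> (\<forall>i\<in>L. \<forall>j\<in>R - L. v j \<le> v i)"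

end

theory Submission
  imports Defs
begin

(* Write Ent(a) = (1/A) * sum_i a_i ln(A/a_i) with A = sum_i a_i, and let t be the smallest
   variance in L.  Every arm of G^r outside L has variance at most t, and each dyadic group
   contributes at most 2m of them, so a geometric series gives sum_{i not in L} sqrt(sigma_i^2 t) = O(m t).
   Since x ln(A/x) <= sqrt(x t) (ln(A/t) + 2) for x <= t, these arms add only O(m t ln(A/t)) to the
   unnormalised entropy.  On the other hand L alone carries Omega(m t ln(A_L/t)): fewer than three of
   its terms exceed a third of A_L, and x ln(A_L/x) is increasing below A_L/e.  The monotonicity of
   (ln x + 1)/x compares the two logarithms and yields Ent(sigma^2_{G^r}) <= 136 Ent(sigma^2_L) for every
   admissible choice of G^r. *)

lemma Ent_eq_sum_mult_ln:
  assumes "finite S" "S \<noteq> {}" "\<And>i. i \<in> S \<Longrightarrow> 0 < a i"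
  shows "Ent a S = (\<Sum>i\<in>S. a i * ln (sum a S / a i)) / sum a S"
proof -
  have "sum a S > 0" using assms by (simp add: sum_pos)
  then have "- (a i / sum a S * ln (a i / sum a S)) = a i * ln (sum a S / a i) / sum a S"
    if "i \<in> S" for i
    using assms(3)[OF that] by (simp add: ln_div algebra_simps diff_divide_distrib)
  then show ?thesis
    unfolding Ent_def sum_negf[symmetric] sum_divide_distrib by (rule sum.cong[OF refl])
qed

lemma mult_ln_div_le_diff:
  fixes x y :: real
  assumes "0 \<le> x" "x \<le> y"
  shows "x * ln (y / x) \<le> y - x"
proof (cases "x = 0")
  case False
  then have "x * ln (y / x) \<le> x * (y / x - 1)"
    using assms by (intro mult_left_mono ln_le_minus_one) auto
  also have "\<dots> = y - x" using False by (simp add: field_simps)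
  finally show ?thesis .
qed (use assms in simp)

lemma mult_ln_div_mono:
  fixes x y s :: real
  assumes "0 < x" "x \<le> y" "exp 1 * y \<le> s"
  shows "x * ln (s / x) \<le> y * ln (s / y)"
proof -
  have "y > 0" using assms by linarith
  then have "0 < exp 1 * y" by simp
  then have "s > 0" using assms by linarith
  have "1 \<le> ln (s / y)"
    using assms \<open>y > 0\<close> \<open>s > 0\<close> by (subst ln_ge_iff) (auto simp: field_simps)
  have "x * ln (y / x) \<le> y - x"
    using assms by (intro mult_ln_div_le_diff) auto
  also have "\<dots> \<le> (y - x) * ln (s / y)"
    using \<open>1 \<le> ln (s / y)\<close> assms by (metis diff_ge_0_iff_ge mult.right_neutral mult_left_mono)
  finally have "x * ln (y / x) \<le> (y - x) * ln (s / y)" .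
  moreover have "ln (s / x) = ln (s / y) + ln (y / x)"
    using assms \<open>y > 0\<close> \<open>s > 0\<close> by (simp add: ln_div)
  ultimately show ?thesis by (simp add: algebra_simps)
qed

lemma mult_ln_div_le_sqrt:
  fixes x t s :: real
  assumes "0 < x" "x \<le> t" "t \<le> s"
  shows "x * ln (s / x) \<le> sqrt (x * t) * (ln (s / t) + 2)"
proof -
  have "t > 0" using assms by linarith
  have "x = sqrt (x * x)" using assms by simp
  also have "\<dots> \<le> sqrt (x * t)" using assms by (intro real_sqrt_le_mono mult_left_mono) auto
  finally have "x * ln (s / t) \<le> sqrt (x * t) * ln (s / t)"
    using assms \<open>t > 0\<close> by (intro mult_right_mono) auto
  moreover have "x * ln (t / x) \<le> 2 * sqrt (x * t)"
  proof -
    have "ln (t / x) = 2 * ln (sqrt (t / x))" using assms \<open>t > 0\<close> by (simp add: ln_sqrt)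
    also have "\<dots> \<le> 2 * sqrt (t / x)" using assms \<open>t > 0\<close> ln_le_minus_one[of "sqrt (t / x)"] by simp
    finally have "x * ln (t / x) \<le> 2 * (x * sqrt (t / x))"
      using assms by (metis mult.left_commute mult_left_mono less_imp_le)
    also have "x * sqrt (t / x) = sqrt (x\<^sup>2 * (t / x))"
      using assms by (subst real_sqrt_mult) simp
    also have "x\<^sup>2 * (t / x) = x * t"
      using assms by (simp add: power2_eq_square)
    finally show ?thesis .
  qed
  moreover have "ln (s / x) = ln (s / t) + ln (t / x)"
    using assms \<open>t > 0\<close> by (simp add: ln_div)
  ultimately show ?thesis by (simp add: algebra_simps)
qed

lemma ln_add_one_div_antimono:
  fixes a b :: real
  assumes "1 \<le> a" "a \<le> b"
  shows "(ln b + 1) / b \<le> (ln a + 1) / a"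
proof -
  have "ln b = ln a + ln (b / a)" using assms by (simp add: ln_div)
  moreover have "ln (b / a) \<le> b / a - 1" using assms by (intro ln_le_minus_one) auto
  ultimately have "a * (ln b + 1) \<le> a * ln a + b"
    using assms by (simp add: algebra_simps) (simp add: field_simps)
  also have "\<dots> \<le> b * (ln a + 1)"
    using assms by (simp add: algebra_simps mult_right_mono)
  finally show ?thesis using assms by (simp add: field_simps)
qed

lemma mult_ln_add_three_le:
  fixes t s S :: real
  assumes "0 < t" "2 * t \<le> s" "s \<le> S"
  shows "t * (ln (S / t) + 3) \<le> 9 * (S / s) * (t * ln (s / t))"
proof -
  define a where "a = s / t"
  define b where "b = S / t"
  have "2 \<le> a" "a \<le> b" using assms by (auto simp: a_def b_def field_simps)
  have "1 / 2 \<le> ln (2::real)" using ln_le_minus_one[of "1 / 2 :: real"] by (simp add: ln_div)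
  also have "\<dots> \<le> ln a" using \<open>2 \<le> a\<close> by simp
  finally have "1 / 2 \<le> ln a" .
  have "0 \<le> ln b" using \<open>2 \<le> a\<close> \<open>a \<le> b\<close> by simp
  then have "(ln b + 3) / b \<le> 3 * ((ln b + 1) / b)"
    using \<open>2 \<le> a\<close> \<open>a \<le> b\<close> by (simp add: divide_right_mono)
  also have "\<dots> \<le> 3 * ((ln a + 1) / a)"
    using \<open>2 \<le> a\<close> \<open>a \<le> b\<close> ln_add_one_div_antimono[of a b] by (intro mult_left_mono) auto
  also have "\<dots> \<le> 9 * ln a / a"
    using \<open>1 / 2 \<le> ln a\<close> \<open>2 \<le> a\<close> by (simp add: divide_right_mono)
  finally have "(ln b + 3) / b \<le> 9 * ln a / a" .
  then show ?thesis
    using assms unfolding a_def b_def by (simp add: field_simps)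
qed

lemma card_large_terms_less:
  fixes v :: "'a \<Rightarrow> real"
  assumes "finite L" "\<And>i. i \<in> L \<Longrightarrow> 0 < v i" "0 < c"
  shows "real (card {i \<in> L. sum v L < c * v i}) < c"
proof (cases "{i \<in> L. sum v L < c * v i} = {}")
  case True
  show ?thesis using assms by (simp add: True)
next
  case False
  define B where "B = {i \<in> L. sum v L < c * v i}"
  have "finite B" "B \<subseteq> L" "B \<noteq> {}" using assms False by (auto simp: B_def)
  then have "0 < sum v L" using assms by (auto intro: sum_pos)
  have "real (card B) * sum v L = (\<Sum>i\<in>B. sum v L)" by simp
  also have "\<dots> < (\<Sum>i\<in>B. c * v i)"
    using \<open>finite B\<close> \<open>B \<noteq> {}\<close> by (intro sum_strict_mono) (auto simp: B_def)
  also have "\<dots> \<le> c * sum v L"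
    using \<open>B \<subseteq> L\<close> assms
    by (auto simp: sum_distrib_left[symmetric] less_imp_le intro!: sum_mono2)
  finally show ?thesis using \<open>0 < sum v L\<close> unfolding B_def by simp
qed

lemma mult_ln_sum_div_nonneg:
  fixes v :: "'a \<Rightarrow> real"
  assumes "finite L" "\<And>i. i \<in> L \<Longrightarrow> 0 < v i" "i \<in> L"
  shows "0 \<le> v i * ln (sum v L / v i)"
proof -
  have "v i \<le> sum v L" using assms by (intro member_le_sum) (auto intro: less_imp_le)
  moreover have "0 < v i" using assms(2,3) .
  ultimately show ?thesis by simp
qed

lemma card_mult_min_term_le_sum:
  fixes v :: "'a \<Rightarrow> real"
  assumes "finite L" "i0 \<in> L" "0 < v i0" "\<And>i. i \<in> L \<Longrightarrow> v i0 \<le> v i"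
  shows "real (card L) * (v i0 * ln (sum v L / v i0)) \<le> 3 * (\<Sum>i\<in>L. v i * ln (sum v L / v i))"
proof -
  define s where "s = sum v L"
  define f where "f = v i0 * ln (s / v i0)"
  define P where "P = (\<Sum>i\<in>L. v i * ln (s / v i))"
  define B where "B = {i \<in> L. s < 3 * v i}"
  have pos: "0 < v i" if "i \<in> L" for i using assms that by (meson less_le_trans)
  have term_nonneg: "0 \<le> v i * ln (s / v i)" if "i \<in> L" for i
    unfolding s_def using assms(1) pos that by (rule mult_ln_sum_div_nonneg)
  have "f \<le> P"
    unfolding f_def P_def using assms term_nonneg by (intro member_le_sum) auto
  have "0 \<le> f" unfolding f_def using term_nonneg assms(2) .
  have "real (card B) < 3" unfolding B_def s_def using card_large_terms_less[of L v 3] assms pos by simp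
  then have "real (card L) - 2 \<le> real (card (L - B))"
    using card_Diff_subset[of B L] card_mono[of L B] assms(1) by (auto simp: B_def)
  then have "(real (card L) - 2) * f \<le> real (card (L - B)) * f"
    using \<open>0 \<le> f\<close> by (rule mult_right_mono)
  also have "\<dots> \<le> (\<Sum>i\<in>L - B. v i * ln (s / v i))"
  proof (rule sum_bounded_below)
    fix i assume "i \<in> L - B"
    then have "exp 1 * v i \<le> 3 * v i" "3 * v i \<le> s"
      using exp_le pos[of i] by (auto simp: B_def intro: mult_right_mono)
    then show "f \<le> v i * ln (s / v i)" using \<open>i \<in> L - B\<close> unfolding f_def
      by (intro mult_ln_div_mono) (auto simp: assms)
  qed
  also have "\<dots> \<le> P" unfolding P_def using assms term_nonneg by (intro sum_mono2) auto
  finally have "(real (card L) - 2) * f \<le> P" .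
  moreover have "real (card L) * f \<le> 3 * f \<or> real (card L) * f \<le> (3 * (real (card L) - 2)) * f"
    using \<open>0 \<le> f\<close> by (cases "card L \<le> 3") (auto intro!: mult_right_mono)
  ultimately have "real (card L) * f \<le> 3 * P" using \<open>f \<le> P\<close> by linarith
  then show ?thesis unfolding s_def f_def P_def .
qed

lemma sum_mult_ln_div_le_split:
  fixes v :: "'a \<Rightarrow> real"
  assumes "finite R" "L \<subseteq> R" "\<And>i. i \<in> R \<Longrightarrow> 0 < v i"
  shows "(\<Sum>i\<in>R. v i * ln (sum v R / v i))
    \<le> (\<Sum>i\<in>L. v i * ln (sum v L / v i)) + sum v (R - L) + (\<Sum>i\<in>R - L. v i * ln (sum v R / v i))"
proof -
  define S where "S = sum v R"
  define s where "s = sum v L"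
  have "finite L" using assms finite_subset by blast
  have S_eq: "S = s + sum v (R - L)"
    unfolding S_def s_def using sum.subset_diff[OF assms(2,1), of v] by linarith
  have "0 \<le> sum v (R - L)" "0 \<le> s"
    unfolding s_def using assms by (auto intro!: sum_nonneg intro: less_imp_le)
  have "(\<Sum>i\<in>L. v i * ln (S / v i)) = (\<Sum>i\<in>L. v i * ln (S / s) + v i * ln (s / v i))"
  proof (rule sum.cong[OF refl])
    fix i assume "i \<in> L"
    then have "0 < v i" using assms by auto
    moreover have "v i \<le> s"
      unfolding s_def using assms \<open>i \<in> L\<close> \<open>finite L\<close>
      by (intro member_le_sum) (auto intro: less_imp_le)
    moreover have "s \<le> S" using S_eq \<open>0 \<le> sum v (R - L)\<close> by simp
    ultimately show "v i * ln (S / v i) = v i * ln (S / s) + v i * ln (s / v i)"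
      by (simp add: ln_div algebra_simps)
  qed
  also have "\<dots> = s * ln (S / s) + (\<Sum>i\<in>L. v i * ln (s / v i))"
    unfolding s_def by (simp add: sum.distrib sum_distrib_right)
  also have "s * ln (S / s) \<le> sum v (R - L)"
    using mult_ln_div_le_diff[of s S] S_eq \<open>0 \<le> sum v (R - L)\<close> \<open>0 \<le> s\<close> by simp
  finally have "(\<Sum>i\<in>L. v i * ln (S / v i)) \<le> sum v (R - L) + (\<Sum>i\<in>L. v i * ln (s / v i))"
    by simp
  then show ?thesis
    using sum.subset_diff[OF assms(2,1), of "\<lambda>i. v i * ln (S / v i)"] unfolding S_def s_def by linarith
qed

lemma sum_mult_ln_div_le_sqrt_tail:
  fixes v :: "'a \<Rightarrow> real"
  assumes "finite R" "L \<subseteq> R" "\<And>i. i \<in> R \<Longrightarrow> 0 < v i"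
    and "t \<le> sum v R" "\<And>i. i \<in> R - L \<Longrightarrow> v i \<le> t"
  shows "(\<Sum>i\<in>R. v i * ln (sum v R / v i))
    \<le> (\<Sum>i\<in>L. v i * ln (sum v L / v i)) + (ln (sum v R / t) + 3) * (\<Sum>i\<in>R - L. sqrt (v i * t))"
proof -
  have "v i \<le> sqrt (v i * t)" if "i \<in> R - L" for i
  proof -
    have "0 < v i" "v i \<le> t" using assms(3,5) that by auto
    then have "sqrt (v i * v i) \<le> sqrt (v i * t)" by (intro real_sqrt_le_mono mult_left_mono) auto
    then show ?thesis using \<open>0 < v i\<close> by simp
  qed
  then have "sum v (R - L) \<le> (\<Sum>i\<in>R - L. sqrt (v i * t))" by (rule sum_mono)
  moreover have "(\<Sum>i\<in>R - L. v i * ln (sum v R / v i)) \<le> (\<Sum>i\<in>R - L. sqrt (v i * t)) * (ln (sum v R / t) + 2)"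
    unfolding sum_distrib_right using assms by (intro sum_mono mult_ln_div_le_sqrt) auto
  ultimately show ?thesis
    using sum_mult_ln_div_le_split[of R L v] assms(1-3) by (simp add: algebra_simps)
qed

lemma sum_mult_ln_div_le_of_light_tail:
  fixes v :: "'a \<Rightarrow> real" and C :: real
  assumes "finite R" "L \<subseteq> R" "\<And>i. i \<in> R \<Longrightarrow> 0 < v i" "2 \<le> card L"
    and "i0 \<in> L" "\<And>i. i \<in> L \<Longrightarrow> v i0 \<le> v i" "\<And>i. i \<in> R - L \<Longrightarrow> v i \<le> v i0"
    and "0 \<le> C" "(\<Sum>i\<in>R - L. sqrt (v i * v i0)) \<le> C * card L * v i0"
  shows "(\<Sum>i\<in>R. v i * ln (sum v R / v i))
    \<le> (1 + 27 * C * (sum v R / sum v L)) * (\<Sum>i\<in>L. v i * ln (sum v L / v i))"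
proof -
  define t where "t = v i0"
  define k where "k = real (card L)"
  define s where "s = sum v L"
  define S where "S = sum v R"
  define PL where "PL = (\<Sum>i\<in>L. v i * ln (s / v i))"
  have "finite L" using assms finite_subset by auto
  have "0 < t" unfolding t_def using assms by auto
  have "2 * t \<le> k * t" unfolding k_def using assms \<open>0 < t\<close> by (intro mult_right_mono) auto
  also have "k * t \<le> s" unfolding k_def s_def t_def using assms by (intro sum_bounded_below) auto
  finally have "2 * t \<le> s" .
  have "s \<le> S" unfolding s_def S_def using assms by (intro sum_mono2) (auto intro: less_imp_le)
  have "0 < s" "0 \<le> k" "0 \<le> ln (S / t) + 3" using \<open>0 < t\<close> \<open>2 * t \<le> s\<close> \<open>s \<le> S\<close>
    by (auto simp: k_def)
  have "(\<Sum>i\<in>R. v i * ln (S / v i)) \<le> PL + (ln (S / t) + 3) * (\<Sum>i\<in>R - L. sqrt (v i * t))"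
    using \<open>2 * t \<le> s\<close> \<open>s \<le> S\<close> \<open>0 < t\<close> unfolding PL_def S_def s_def t_def
    by (intro sum_mult_ln_div_le_sqrt_tail assms) auto
  also have "\<dots> \<le> PL + C * k * (t * (ln (S / t) + 3))"
    using mult_left_mono[OF assms(9) \<open>0 \<le> ln (S / t) + 3\<close>] unfolding k_def t_def
    by (simp add: algebra_simps)
  also have "C * k * (t * (ln (S / t) + 3)) \<le> C * k * (9 * (S / s) * (t * ln (s / t)))"
    using mult_ln_add_three_le[OF \<open>0 < t\<close> \<open>2 * t \<le> s\<close> \<open>s \<le> S\<close>] \<open>0 \<le> C\<close> \<open>0 \<le> k\<close>
    by (intro mult_left_mono) auto
  also have "\<dots> = 9 * C * (S / s) * (k * (t * ln (s / t)))" by (simp add: algebra_simps)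
  also have "\<dots> \<le> 9 * C * (S / s) * (3 * PL)"
    using card_mult_min_term_le_sum[of L i0 v] assms \<open>finite L\<close> \<open>0 \<le> C\<close> \<open>0 < s\<close> \<open>s \<le> S\<close>
    unfolding k_def t_def s_def PL_def by (intro mult_left_mono) auto
  finally show ?thesis by (simp add: S_def s_def PL_def algebra_simps)
qed

lemma Ent_le_Ent_of_light_tail:
  fixes v :: "'a \<Rightarrow> real" and C :: real
  assumes "finite R" "L \<subseteq> R" "\<And>i. i \<in> R \<Longrightarrow> 0 < v i" "2 \<le> card L"
    and "i0 \<in> L" "\<And>i. i \<in> L \<Longrightarrow> v i0 \<le> v i" "\<And>i. i \<in> R - L \<Longrightarrow> v i \<le> v i0"
    and "0 \<le> C" "(\<Sum>i\<in>R - L. sqrt (v i * v i0)) \<le> C * card L * v i0"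
  shows "Ent v R \<le> (1 + 27 * C) * Ent v L"
proof -
  define s where "s = sum v L"
  define S where "S = sum v R"
  define PL where "PL = (\<Sum>i\<in>L. v i * ln (s / v i))"
  define PR where "PR = (\<Sum>i\<in>R. v i * ln (S / v i))"
  have "finite L" "L \<noteq> {}" "R \<noteq> {}" using assms finite_subset by auto
  have "0 < s" unfolding s_def using assms \<open>finite L\<close> \<open>L \<noteq> {}\<close> by (intro sum_pos) auto
  have "s \<le> S" unfolding s_def S_def using assms by (intro sum_mono2) (auto intro: less_imp_le)
  have "0 \<le> PL"
    unfolding PL_def s_def using assms \<open>finite L\<close> by (intro sum_nonneg mult_ln_sum_div_nonneg) auto
  have "PR / S \<le> (1 + 27 * C * (S / s)) * PL / S"
    using sum_mult_ln_div_le_of_light_tail[OF assms] \<open>0 < s\<close> \<open>s \<le> S\<close>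
    unfolding PR_def PL_def S_def s_def by (intro divide_right_mono) auto
  also have "\<dots> = PL / S + 27 * C * (PL / s)"
    using \<open>0 < s\<close> \<open>s \<le> S\<close> by (simp add: field_simps)
  also have "\<dots> \<le> (1 + 27 * C) * (PL / s)"
    using \<open>0 \<le> PL\<close> \<open>0 < s\<close> \<open>s \<le> S\<close> by (simp add: divide_left_mono algebra_simps)
  finally have "PR / S \<le> (1 + 27 * C) * (PL / s)" .
  moreover have "Ent v R = PR / S" "Ent v L = PL / s"
    unfolding PR_def S_def PL_def s_def using assms \<open>finite L\<close> \<open>L \<noteq> {}\<close> \<open>R \<noteq> {}\<close>
    by (auto intro!: Ent_eq_sum_mult_ln)
  ultimately show ?thesis by simp
qed

lemma ex_dyadic_interval:
  fixes y :: real
  assumes "1 \<le> y"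
  shows "\<exists>k. 2 ^ (k - 1) \<le> y \<and> y < 2 ^ k"
proof -
  define k where "k = (LEAST k. y < 2 ^ k)"
  have "y < 2 ^ k" unfolding k_def using real_arch_pow[of 2 y] by (auto intro: LeastI_ex)
  moreover have "k \<noteq> 0" using \<open>y < 2 ^ k\<close> assms by (intro notI) simp
  then have "\<not> y < 2 ^ (k - 1)" unfolding k_def by (intro not_less_Least) auto
  ultimately show ?thesis by (auto simp: not_less)
qed

lemma sum_sqrt_dyadic_classes_le:
  fixes v :: "'a \<Rightarrow> real" and cls :: "'a \<Rightarrow> nat"
  assumes "finite A" "0 < \<mu>" "\<mu> \<le> t"
    and "\<And>i. i \<in> A \<Longrightarrow> v i \<le> t"
    and "\<And>i. i \<in> A \<Longrightarrow> 2 ^ (cls i - 1) \<le> v i / \<mu> \<and> v i / \<mu> < 2 ^ cls i"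
    and "\<And>j. card {i \<in> A. cls i = j} \<le> K"
  shows "(\<Sum>i\<in>A. sqrt (v i * t)) \<le> 5 * K * t"
proof -
  obtain J where J: "2 ^ (J - 1) \<le> t / \<mu>" "t / \<mu> < 2 ^ J"
    using ex_dyadic_interval[of "t / \<mu>"] assms(2,3) by auto
  define w :: real where "w = sqrt 2"
  have "1.4 \<le> w" unfolding w_def by (rule real_le_rsqrt) (simp add: power2_eq_square)
  have "0 < t" using assms(2,3) by linarith
  have "1 \<le> J" using J by (cases J) auto
  have cls_range: "cls i \<in> {1..J}" if "i \<in> A" for i
  proof -
    have "(2::real) ^ (cls i - 1) < 2 ^ J"
      using assms(2) assms(4,5)[OF that] J(2) divide_right_mono[of "v i" t \<mu>] by linarith
    moreover have "cls i \<noteq> 0" using assms(5)[OF that] by (intro notI) auto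
    ultimately show ?thesis by auto
  qed
  have class_bound: "sqrt (v i * t) \<le> t * w ^ cls i / w ^ (J - 1)" if "i \<in> A" for i
  proof -
    have "v i * 2 ^ (J - 1) \<le> 2 ^ cls i * \<mu> * (t / \<mu>)"
      using assms(2) assms(4,5)[OF that] J(1) \<open>0 < t\<close>
      by (intro mult_mono) (auto simp: field_simps intro: less_imp_le)
    then have "v i * t \<le> t * t * 2 ^ cls i / 2 ^ (J - 1)"
      using assms(2) \<open>0 < t\<close> by (simp add: field_simps)
    then have "sqrt (v i * t) \<le> sqrt (t * t * 2 ^ cls i / 2 ^ (J - 1))" by (rule real_sqrt_le_mono)
    also have "\<dots> = t * w ^ cls i / w ^ (J - 1)"
      using \<open>0 < t\<close> by (simp add: w_def real_sqrt_mult real_sqrt_divide real_sqrt_power)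
    finally show ?thesis .
  qed
  have "(\<Sum>i\<in>A. sqrt (v i * t)) = (\<Sum>j\<in>{1..J}. \<Sum>i\<in>{i \<in> A. cls i = j}. sqrt (v i * t))"
    using assms(1) cls_range by (intro sum.group[symmetric]) auto
  also have "\<dots> \<le> (\<Sum>j\<in>{1..J}. K * (t * w ^ j / w ^ (J - 1)))"
  proof (intro sum_mono)
    fix j
    have "(\<Sum>i\<in>{i \<in> A. cls i = j}. sqrt (v i * t)) \<le> card {i \<in> A. cls i = j} * (t * w ^ j / w ^ (J - 1))"
      using class_bound by (intro sum_bounded_above) auto
    also have "\<dots> \<le> K * (t * w ^ j / w ^ (J - 1))"
      using assms(6)[of j] \<open>0 < t\<close> by (intro mult_right_mono) (auto simp: w_def)
    finally show "(\<Sum>i\<in>{i \<in> A. cls i = j}. sqrt (v i * t)) \<le> K * (t * w ^ j / w ^ (J - 1))" .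
  qed
  also have "\<dots> = K * t / w ^ (J - 1) * (\<Sum>j\<in>{1..J}. w ^ j)"
    by (simp add: sum_distrib_left mult.assoc)
  also have "\<dots> \<le> K * t / w ^ (J - 1) * (w ^ (J - 1) * (w ^ 2 / (w - 1)))"
  proof (intro mult_left_mono)
    have "(\<Sum>j\<in>{1..J}. w ^ j) \<le> (\<Sum>j<J + 1. w ^ j)"
      using \<open>1.4 \<le> w\<close> by (intro sum_mono2) auto
    also have "\<dots> = (w ^ (J + 1) - 1) / (w - 1)"
      using \<open>1.4 \<le> w\<close> by (intro geometric_sum) auto
    also have "\<dots> \<le> w ^ (J + 1) / (w - 1)"
      using \<open>1.4 \<le> w\<close> by (intro divide_right_mono) auto
    also have "w ^ (J + 1) = w ^ (J - 1) * w ^ 2"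
      using \<open>1 \<le> J\<close> by (simp flip: power_add)
    finally show "(\<Sum>j\<in>{1..J}. w ^ j) \<le> w ^ (J - 1) * (w ^ 2 / (w - 1))" by simp
  qed (use \<open>0 < t\<close> \<open>1.4 \<le> w\<close> in auto)
  also have "\<dots> = K * t * (w ^ 2 / (w - 1))"
    using \<open>1.4 \<le> w\<close> by simp
  also have "\<dots> \<le> K * t * 5"
    using \<open>1.4 \<le> w\<close> \<open>0 < t\<close> by (intro mult_left_mono) (auto simp: w_def field_simps)
  finally show ?thesis by (simp add: algebra_simps)
qed

lemma min_var_pos_le:
  assumes "\<forall>i\<in>{1..n}. 0 < v i" "i \<in> {1..n}"
  shows "0 < min_var v n" "min_var v n \<le> v i"
  using assms Min_in[of "v ` {1..n}"] unfolding min_var_def by auto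

lemma ex_grp:
  assumes "\<forall>i\<in>{1..n}. 0 < v i" "i \<in> {1..n}"
  shows "\<exists>j. i \<in> grp v n j"
proof -
  have "1 \<le> v i / min_var v n" using min_var_pos_le[OF assms] by simp
  then show ?thesis using assms(2) ex_dyadic_interval unfolding grp_def by auto
qed

lemma card_Int_grp_le:
  assumes "admissible_Gr v n m R"
  shows "card (R \<inter> grp v n j) \<le> 2 * m"
proof (cases "j = 0")
  case True
  then have "grp v n j = {}" unfolding grp_def by auto
  then show ?thesis by simp
next
  case False
  then have "(card (grp v n j) \<le> 2 * m \<longrightarrow> R \<inter> grp v n j = grp v n j) \<and>
      (2 * m < card (grp v n j) \<longrightarrow> card (R \<inter> grp v n j) = 2 * m)"
    using assms unfolding admissible_Gr_def by simp
  then show ?thesis by (cases "card (grp v n j) \<le> 2 * m") auto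
qed

lemma sum_sqrt_outside_top_le:
  assumes "\<forall>i\<in>{1..n}. 0 < v i" "admissible_Gr v n m R" "is_top v m R L" "i0 \<in> L"
  shows "(\<Sum>i\<in>R - L. sqrt (v i * v i0)) \<le> 5 * real (card L) * v i0"
proof -
  have "R \<subseteq> {1..n}" "L \<subseteq> R" "card L = 2 * m" "\<And>i. i \<in> R - L \<Longrightarrow> v i \<le> v i0"
    using assms(2-4) unfolding admissible_Gr_def is_top_def by auto
  obtain cls where cls: "\<And>i. i \<in> {1..n} \<Longrightarrow> i \<in> grp v n (cls i)"
    using ex_grp[OF assms(1)] by metis
  show ?thesis
  proof (rule sum_sqrt_dyadic_classes_le[where \<mu> = "min_var v n" and cls = cls])
    show "finite (R - L)" using \<open>R \<subseteq> {1..n}\<close> finite_subset by blast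
    show "0 < min_var v n" "min_var v n \<le> v i0"
      using min_var_pos_le[OF assms(1)] \<open>R \<subseteq> {1..n}\<close> \<open>L \<subseteq> R\<close> assms(4) by auto
    show "\<And>i. i \<in> R - L \<Longrightarrow> v i \<le> v i0" by fact
    show "2 ^ (cls i - 1) \<le> v i / min_var v n \<and> v i / min_var v n < 2 ^ cls i" if "i \<in> R - L" for i
      using cls[of i] that \<open>R \<subseteq> {1..n}\<close> unfolding grp_def by auto
    show "card {i \<in> R - L. cls i = j} \<le> card L" for j
    proof -
      have "{i \<in> R - L. cls i = j} \<subseteq> R \<inter> grp v n j" using cls \<open>R \<subseteq> {1..n}\<close> by auto
      then have "card {i \<in> R - L. cls i = j} \<le> card (R \<inter> grp v n j)"
        by (intro card_mono) (auto simp: grp_def)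
      then show ?thesis using card_Int_grp_le[OF assms(2)] \<open>card L = 2 * m\<close> by (metis le_trans)
    qed
  qed
qed

theorem lemma10:
  shows "\<exists>c'::real. 0 < c' \<and> c' < 1 \<and>
    (\<forall>(m::nat) (n::nat) (v::nat \<Rightarrow> real) R L.
       1 \<le> m \<longrightarrow> 2 * m < n \<longrightarrow> (\<forall>i\<in>{1..n}. 0 < v i) \<longrightarrow>
       is_Gr v n m R \<longrightarrow> is_top v m R L \<longrightarrow>
       Ent v L \<ge> c' * Ent v R - c' * ln 2)"
proof (intro exI[of _ "1 / 136"] conjI allI impI)
  fix m n :: nat and v :: "nat \<Rightarrow> real" and R L
  assume "1 \<le> m" and pos: "\<forall>i\<in>{1..n}. 0 < v i" and "is_Gr v n m R" and top: "is_top v m R L"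
  then have adm: "admissible_Gr v n m R" unfolding is_Gr_def by simp
  then have "finite R" "L \<subseteq> R" "2 \<le> card L"
    using top \<open>1 \<le> m\<close> finite_subset unfolding admissible_Gr_def is_top_def by auto
  then have "finite L" "L \<noteq> {}" using finite_subset by auto
  then obtain i0 where "i0 \<in> L" "\<And>i. i \<in> L \<Longrightarrow> v i0 \<le> v i"
    using arg_min_if_finite[of L v] by (metis not_le)
  moreover have "\<And>i. i \<in> R - L \<Longrightarrow> v i \<le> v i0"
    using top \<open>i0 \<in> L\<close> unfolding is_top_def by auto
  moreover have "\<And>i. i \<in> R \<Longrightarrow> 0 < v i"
    using pos adm unfolding admissible_Gr_def by auto
  ultimately have "Ent v R \<le> (1 + 27 * 5) * Ent v L"
    using sum_sqrt_outside_top_le[OF pos adm top \<open>i0 \<in> L\<close>] \<open>finite R\<close> \<open>L \<subseteq> R\<close> \<open>2 \<le> card L\<close>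
    by (intro Ent_le_Ent_of_light_tail[where C = 5]) auto
  then have "Ent v R \<le> 136 * Ent v L" by simp
  moreover have "0 \<le> ln (2::real)" by simp
  ultimately show "1 / 136 * Ent v R - 1 / 136 * ln 2 \<le> Ent v L" by linarith
qed simp_all

end
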